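(* Let $\mathbb{A}$ be as below, $S\subseteq\mathbb{A}$ finite, and $\mathcal{O}\subseteq\mathbb{A}^I$ an $S$-ordered orbit. Then every $a\in\mathcal{O}$ can be extended to an $\mathcal{O}$-duo $a\parallel b$, i.e. there is $b\in\mathcal{O}$ such that $a\parallel b$ is an $\mathcal{O}$-duo.
   Context: $\sigma_0$ is a finite vocabulary of unary and binary relations; $\mathscr{C}_0=\operatorname{Forb}(\mathscr{F})$ is a free amalgamation class of finite irreflexive $\sigma_0$-structures (every member of $\mathscr{F}$ has every two elements related, where $u,v$ are related if $u=v$ or $R(u,v)$ or $R(v,u)$ for some binary $R\in\sigma_0$; irreflexive means binary relations hold only between distinct elements); $\mathbb{A}$ is the Fraïssé limit of the class of all totally ordered (by a new symbol $<$) members of $\mathscr{C}_0$. $I$ is a finite totally ordered index set. For finite $S\subseteq\mathbb{A}$, a tuple $a\in\mathbb{A}^I$ is $S$-ordered if $a_i\notin S$ for all $i$ and $a_i<a_j$ whenever $i<j$; an $S$-ordered orbit is $\mathcal{O}=\operatorname{Aut}(\mathbb{A}/S)\cdot a$ for such $a$, where $\operatorname{Aut}(\mathbb{A}/S)$ is the group of automorphisms fixing $S$ pointwise. An $\mathcal{O}$-duo $a\parallel b$ is a pair $a,b\in\mathcal{O}$ with (1) $a_i<b_i$ for all $i\in I$; (2) $b_i<a_j$ for all $i<j$ in $I$; (3) for every binary $R\in\sigma_0$ and $i,j\in I$: $R(a_i,b_j)\iff R(a_i,a_j)\iff R(b_i,b_j)\iff R(b_i,a_j)$. *)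

theory Defs
  imports Main "HOL-Library.FuncSet" "HOL-Library.Countable_Set"
begin

text \<open>Finite structures (members of F, members of the age) are represented on carriers
of natural numbers, which is no loss since every finite structure is isomorphic
to one of these.\<close>

definition emb ::
  "nat set \<Rightarrow> ('u \<Rightarrow> nat \<Rightarrow> bool) \<Rightarrow> ('r \<Rightarrow> nat \<Rightarrow> nat \<Rightarrow> bool) \<Rightarrow>
   'a set \<Rightarrow> ('u \<Rightarrow> 'a \<Rightarrow> bool) \<Rightarrow> ('r \<Rightarrow> 'a \<Rightarrow> 'a \<Rightarrow> bool) \<Rightarrow> (nat \<Rightarrow> 'a) \<Rightarrow> bool" where
  "emb C U R A UA RA h \<longleftrightarrow> inj_on h C \<and> h ` C \<subseteq> A \<and>
     (\<forall>u. \<forall>x\<in>C. U u x \<longleftrightarrow> UA u (h x)) \<and>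
     (\<forall>r. \<forall>x\<in>C. \<forall>y\<in>C. R r x y \<longleftrightarrow> RA r (h x) (h y))"

definition emb_ord ::
  "nat set \<Rightarrow> ('u \<Rightarrow> nat \<Rightarrow> bool) \<Rightarrow> ('r \<Rightarrow> nat \<Rightarrow> nat \<Rightarrow> bool) \<Rightarrow> (nat \<Rightarrow> nat \<Rightarrow> bool) \<Rightarrow>
   'a set \<Rightarrow> ('u \<Rightarrow> 'a \<Rightarrow> bool) \<Rightarrow> ('r \<Rightarrow> 'a \<Rightarrow> 'a \<Rightarrow> bool) \<Rightarrow> ('a \<Rightarrow> 'a \<Rightarrow> bool) \<Rightarrow>
   (nat \<Rightarrow> 'a) \<Rightarrow> bool" where
  "emb_ord C U R L A UA RA lt h \<longleftrightarrow> emb C U R A UA RA h \<and>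
     (\<forall>x\<in>C. \<forall>y\<in>C. L x y \<longleftrightarrow> lt (h x) (h y))"

definition all_related :: "nat set \<Rightarrow> ('r \<Rightarrow> nat \<Rightarrow> nat \<Rightarrow> bool) \<Rightarrow> bool" where
  "all_related C R \<longleftrightarrow> (\<forall>x\<in>C. \<forall>y\<in>C. x = y \<or> (\<exists>r. R r x y \<or> R r y x))"

definition in_Forb ::
  "(nat set \<times> ('u \<Rightarrow> nat \<Rightarrow> bool) \<times> ('r \<Rightarrow> nat \<Rightarrow> nat \<Rightarrow> bool)) set \<Rightarrow>
   nat set \<Rightarrow> ('u \<Rightarrow> nat \<Rightarrow> bool) \<Rightarrow> ('r \<Rightarrow> nat \<Rightarrow> nat \<Rightarrow> bool) \<Rightarrow> bool" where
  "in_Forb F C U R \<longleftrightarrow> finite C \<and> (\<forall>r. \<forall>x\<in>C. \<not> R r x x) \<and>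
     (\<forall>(C', U', R')\<in>F. \<not> (\<exists>h. emb C' U' R' C U R h))"

definition in_ordK ::
  "(nat set \<times> ('u \<Rightarrow> nat \<Rightarrow> bool) \<times> ('r \<Rightarrow> nat \<Rightarrow> nat \<Rightarrow> bool)) set \<Rightarrow>
   nat set \<Rightarrow> ('u \<Rightarrow> nat \<Rightarrow> bool) \<Rightarrow> ('r \<Rightarrow> nat \<Rightarrow> nat \<Rightarrow> bool) \<Rightarrow> (nat \<Rightarrow> nat \<Rightarrow> bool) \<Rightarrow> bool" where
  "in_ordK F C U R L \<longleftrightarrow> in_Forb F C U R \<and>
     (\<forall>x\<in>C. \<not> L x x) \<and>
     (\<forall>x\<in>C. \<forall>y\<in>C. \<forall>z\<in>C. L x y \<and> L y z \<longrightarrow> L x z) \<and>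
     (\<forall>x\<in>C. \<forall>y\<in>C. x \<noteq> y \<longrightarrow> L x y \<or> L y x)"

definition is_aut ::
  "'a set \<Rightarrow> ('u \<Rightarrow> 'a \<Rightarrow> bool) \<Rightarrow> ('r \<Rightarrow> 'a \<Rightarrow> 'a \<Rightarrow> bool) \<Rightarrow> ('a \<Rightarrow> 'a \<Rightarrow> bool) \<Rightarrow>
   ('a \<Rightarrow> 'a) \<Rightarrow> bool" where
  "is_aut A UA RA lt g \<longleftrightarrow> bij_betw g A A \<and>
     (\<forall>u. \<forall>x\<in>A. UA u (g x) \<longleftrightarrow> UA u x) \<and>
     (\<forall>r. \<forall>x\<in>A. \<forall>y\<in>A. RA r (g x) (g y) \<longleftrightarrow> RA r x y) \<and>
     (\<forall>x\<in>A. \<forall>y\<in>A. lt (g x) (g y) \<longleftrightarrow> lt x y)"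

definition homogeneous ::
  "'a set \<Rightarrow> ('u \<Rightarrow> 'a \<Rightarrow> bool) \<Rightarrow> ('r \<Rightarrow> 'a \<Rightarrow> 'a \<Rightarrow> bool) \<Rightarrow> ('a \<Rightarrow> 'a \<Rightarrow> bool) \<Rightarrow> bool" where
  "homogeneous A UA RA lt \<longleftrightarrow>
     (\<forall>X h. X \<subseteq> A \<and> finite X \<and> inj_on h X \<and> h ` X \<subseteq> A \<and>
        (\<forall>u. \<forall>x\<in>X. UA u (h x) \<longleftrightarrow> UA u x) \<and>
        (\<forall>r. \<forall>x\<in>X. \<forall>y\<in>X. RA r (h x) (h y) \<longleftrightarrow> RA r x y) \<and>
        (\<forall>x\<in>X. \<forall>y\<in>X. lt (h x) (h y) \<longleftrightarrow> lt x y)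
      \<longrightarrow> (\<exists>g. is_aut A UA RA lt g \<and> (\<forall>x\<in>X. g x = h x)))"

definition fraisse_limit ::
  "(nat set \<times> ('u \<Rightarrow> nat \<Rightarrow> bool) \<times> ('r \<Rightarrow> nat \<Rightarrow> nat \<Rightarrow> bool)) set \<Rightarrow>
   'a set \<Rightarrow> ('u \<Rightarrow> 'a \<Rightarrow> bool) \<Rightarrow> ('r \<Rightarrow> 'a \<Rightarrow> 'a \<Rightarrow> bool) \<Rightarrow> ('a \<Rightarrow> 'a \<Rightarrow> bool) \<Rightarrow> bool" where
  "fraisse_limit F A UA RA lt \<longleftrightarrow> countable A \<and> homogeneous A UA RA lt \<and>
     (\<forall>C U R L. finite C \<longrightarrow>
        ((\<exists>h. emb_ord C U R L A UA RA lt h) \<longleftrightarrow> in_ordK F C U R L))"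

definition aut_fix ::
  "'a set \<Rightarrow> ('u \<Rightarrow> 'a \<Rightarrow> bool) \<Rightarrow> ('r \<Rightarrow> 'a \<Rightarrow> 'a \<Rightarrow> bool) \<Rightarrow> ('a \<Rightarrow> 'a \<Rightarrow> bool) \<Rightarrow> 'a set \<Rightarrow>
   ('a \<Rightarrow> 'a) \<Rightarrow> bool" where
  "aut_fix A UA RA lt S g \<longleftrightarrow> is_aut A UA RA lt g \<and> (\<forall>s\<in>S. g s = s)"

definition S_ordered :: "'a set \<Rightarrow> ('a \<Rightarrow> 'a \<Rightarrow> bool) \<Rightarrow> 'a set \<Rightarrow> 'i::linorder set \<Rightarrow> ('i \<Rightarrow> 'a) \<Rightarrow> bool" where
  "S_ordered A lt S I a \<longleftrightarrow> a \<in> I \<rightarrow>\<^sub>E A \<and> (\<forall>i\<in>I. a i \<notin> S) \<and>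
     (\<forall>i\<in>I. \<forall>j\<in>I. i < j \<longrightarrow> lt (a i) (a j))"

definition orbit ::
  "'a set \<Rightarrow> ('u \<Rightarrow> 'a \<Rightarrow> bool) \<Rightarrow> ('r \<Rightarrow> 'a \<Rightarrow> 'a \<Rightarrow> bool) \<Rightarrow> ('a \<Rightarrow> 'a \<Rightarrow> bool) \<Rightarrow> 'a set \<Rightarrow>
   'i set \<Rightarrow> ('i \<Rightarrow> 'a) \<Rightarrow> ('i \<Rightarrow> 'a) set" where
  "orbit A UA RA lt S I a = {(\<lambda>i\<in>I. g (a i)) | g. aut_fix A UA RA lt S g}"

definition is_duo :: "('r \<Rightarrow> 'a \<Rightarrow> 'a \<Rightarrow> bool) \<Rightarrow> ('a \<Rightarrow> 'a \<Rightarrow> bool) \<Rightarrow> 'i::linorder set \<Rightarrow>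
   ('i \<Rightarrow> 'a) set \<Rightarrow> ('i \<Rightarrow> 'a) \<Rightarrow> ('i \<Rightarrow> 'a) \<Rightarrow> bool" where
  "is_duo RA lt I Orb a b \<longleftrightarrow> a \<in> Orb \<and> b \<in> Orb \<and>
     (\<forall>i\<in>I. lt (a i) (b i)) \<and>
     (\<forall>i\<in>I. \<forall>j\<in>I. i < j \<longrightarrow> lt (b i) (a j)) \<and>
     (\<forall>r. \<forall>i\<in>I. \<forall>j\<in>I.
        (RA r (a i) (b j) \<longleftrightarrow> RA r (a i) (a j)) \<and>
        (RA r (a i) (a j) \<longleftrightarrow> RA r (b i) (b j)) \<and>
        (RA r (b i) (b j) \<longleftrightarrow> RA r (b i) (a j)))"

end

theory Submission
  imports Defs
begin

text \<open>Let \<open>X = S \<union> {a\<^sub>i}\<close>. Doubling every point of \<open>X\<close> into an unrelated twin placed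
  immediately above it gives an ordered structure in Forb(F): the twins are unrelated, so an
  all-related member of F embedded into the doubled structure would project injectively into
  \<open>X\<close>. Hence the doubled structure embeds into \<open>A\<close>, and by homogeneity it can be
  taken over \<open>X\<close>. A second use of homogeneity yields an automorphism fixing \<open>S\<close> that moves
  each \<open>a\<^sub>i\<close> to its twin \<open>b\<^sub>i\<close>, and the position and relations of the twins are exactly
  the duo conditions.\<close>

definition strict_total_on :: "'b set \<Rightarrow> ('b \<Rightarrow> 'b \<Rightarrow> bool) \<Rightarrow> bool" where
  "strict_total_on D L \<longleftrightarrow> (\<forall>x\<in>D. \<not> L x x) \<and>
     (\<forall>x\<in>D. \<forall>y\<in>D. \<forall>z\<in>D. L x y \<and> L y z \<longrightarrow> L x z) \<and>
     (\<forall>x\<in>D. \<forall>y\<in>D. x \<noteq> y \<longrightarrow> L x y \<or> L y x)"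

lemma in_ordK_iff: "in_ordK F C U R L \<longleftrightarrow> in_Forb F C U R \<and> strict_total_on C L"
  unfolding in_ordK_def strict_total_on_def by blast

lemma strict_total_on_image:
  assumes "inj_on f C"
  shows "strict_total_on (f ` C) L \<longleftrightarrow> strict_total_on C (\<lambda>k l. L (f k) (f l))"
  unfolding strict_total_on_def using assms by (simp add: inj_on_eq_iff)

lemma fraisse_limit_age:
  assumes "fraisse_limit F A UA RA lt" "finite C"
  shows "(\<exists>h. emb_ord C U R L A UA RA lt h) \<longleftrightarrow> in_ordK F C U R L"
  using assms unfolding fraisse_limit_def by simp

lemma fraisse_limit_homogeneous: "fraisse_limit F A UA RA lt \<Longrightarrow> homogeneous A UA RA lt"
  unfolding fraisse_limit_def by blast

lemma fraisse_limit_finite_substructure: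
  assumes "fraisse_limit F A UA RA lt" "finite Y" "Y \<subseteq> A"
  shows "strict_total_on Y lt" and "\<forall>y\<in>Y. \<not> RA r y y"
proof -
  obtain f where f: "bij_betw f {0..<card Y} Y"
    using ex_bij_betw_nat_finite[OF assms(2)] by blast
  have "emb_ord {0..<card Y} (\<lambda>u k. UA u (f k)) (\<lambda>r k l. RA r (f k) (f l))
      (\<lambda>k l. lt (f k) (f l)) A UA RA lt f"
    using f assms(3) unfolding emb_ord_def emb_def bij_betw_def by blast
  then have K: "in_ordK F {0..<card Y} (\<lambda>u k. UA u (f k)) (\<lambda>r k l. RA r (f k) (f l))
      (\<lambda>k l. lt (f k) (f l))"
    using fraisse_limit_age[OF assms(1)] by blast
  moreover have f_img: "f ` {0..<card Y} = Y" and "inj_on f {0..<card Y}"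
    using f by (auto simp: bij_betw_def)
  ultimately show "strict_total_on Y lt"
    by (metis in_ordK_iff strict_total_on_image)
  have "\<forall>k\<in>{0..<card Y}. \<not> RA r (f k) (f k)"
    using K unfolding in_ordK_def in_Forb_def by blast
  then show "\<forall>y\<in>Y. \<not> RA r y y" using f_img by (metis imageE)
qed

lemma fraisse_limit_irrefl:
  assumes "fraisse_limit F A UA RA lt" "x \<in> A"
  shows "\<not> RA r x x"
  using fraisse_limit_finite_substructure(2)[OF assms(1), of "{x}"] assms(2) by simp

lemma fraisse_limit_omits_F:
  assumes "fraisse_limit F A UA RA lt" "(C, U, R) \<in> F" "finite C"
  shows "\<not> emb C U R A UA RA k"
proof
  assume "emb C U R A UA RA k"
  then have "emb_ord C U R (\<lambda>x y. lt (k x) (k y)) A UA RA lt k"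
    by (simp add: emb_ord_def)
  then have "in_Forb F C U R"
    using fraisse_limit_age[OF assms(1,3)] by (auto simp: in_ordK_def)
  moreover have "emb C U R C U R id" by (simp add: emb_def)
  ultimately show False using assms(2) unfolding in_Forb_def by fastforce
qed

lemma all_related_inj_on:
  assumes "all_related C R"
    and "\<forall>r. \<forall>x\<in>C. \<forall>y\<in>C. R r x y \<longleftrightarrow> RA r (k x) (k y)"
    and "\<forall>r. \<forall>x\<in>C. \<not> RA r (k x) (k x)"
  shows "inj_on k C"
proof (rule inj_onI, rule ccontr)
  fix x y assume "x \<in> C" "y \<in> C" "k x = k y" "x \<noteq> y"
  then show False using assms unfolding all_related_def by metis
qed

text \<open>\<open>\<phi>\<close> need not be injective: points with a common image become pairwise unrelated,
  as the relations are irreflexive, and an all-related member of F can meet each such fibre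
  at most once, so it would embed into \<open>A\<close> itself.\<close>
lemma pullback_in_Forb:
  assumes F: "\<forall>(C, U, R)\<in>F. finite C \<and> all_related C R"
    and fl: "fraisse_limit F A UA RA lt"
    and "finite C" "\<phi> ` C \<subseteq> A"
  shows "in_Forb F C (\<lambda>u k. UA u (\<phi> k)) (\<lambda>r k l. RA r (\<phi> k) (\<phi> l))"
  unfolding in_Forb_def
proof (intro conjI allI ballI)
  show "finite C" by fact
  show "\<not> RA r (\<phi> k) (\<phi> k)" if "k \<in> C" for r k
    using fraisse_limit_irrefl[OF fl] that assms(4) by blast
  fix M assume M: "M \<in> F"
  obtain C' U' R' where M_eq: "M = (C', U', R')" by (cases M)
  have "\<not> emb C' U' R' C (\<lambda>u k. UA u (\<phi> k)) (\<lambda>r k l. RA r (\<phi> k) (\<phi> l)) h" for h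
  proof
    assume h: "emb C' U' R' C (\<lambda>u k. UA u (\<phi> k)) (\<lambda>r k l. RA r (\<phi> k) (\<phi> l)) h"
    have into_A: "\<phi> (h x) \<in> A" if "x \<in> C'" for x
      using h assms(4) that unfolding emb_def by blast
    have "inj_on (\<phi> \<circ> h) C'"
    proof (rule all_related_inj_on)
      show "all_related C' R'" using F M M_eq by auto
      show "\<forall>r. \<forall>x\<in>C'. \<forall>y\<in>C'. R' r x y \<longleftrightarrow> RA r ((\<phi> \<circ> h) x) ((\<phi> \<circ> h) y)"
        using h unfolding emb_def by simp
      show "\<forall>r. \<forall>x\<in>C'. \<not> RA r ((\<phi> \<circ> h) x) ((\<phi> \<circ> h) x)"
        using fraisse_limit_irrefl[OF fl] into_A by simp
    qed
    then have "emb C' U' R' A UA RA (\<phi> \<circ> h)"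
      using h into_A unfolding emb_def by auto
    then show False
      using fraisse_limit_omits_F[OF fl] F M M_eq by fastforce
  qed
  then show "case M of (C', U', R') \<Rightarrow>
      \<not> (\<exists>h. emb C' U' R' C (\<lambda>u k. UA u (\<phi> k)) (\<lambda>r k l. RA r (\<phi> k) (\<phi> l)) h)"
    using M_eq by simp
qed

definition is_copy ::
  "'a set \<Rightarrow> ('u \<Rightarrow> 'a \<Rightarrow> bool) \<Rightarrow> ('r \<Rightarrow> 'a \<Rightarrow> 'a \<Rightarrow> bool) \<Rightarrow>
   'b set \<Rightarrow> ('b \<Rightarrow> 'a) \<Rightarrow> ('b \<Rightarrow> 'a) \<Rightarrow> bool" where
  "is_copy A UA RA D \<pi> p \<longleftrightarrow> inj_on p D \<and> p ` D \<subseteq> A \<and>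
     (\<forall>u. \<forall>\<xi>\<in>D. UA u (p \<xi>) \<longleftrightarrow> UA u (\<pi> \<xi>)) \<and>
     (\<forall>r. \<forall>\<xi>\<in>D. \<forall>\<eta>\<in>D. RA r (p \<xi>) (p \<eta>) \<longleftrightarrow> RA r (\<pi> \<xi>) (\<pi> \<eta>))"

lemma is_copy_reindex:
  assumes "is_copy A UA RA D \<pi> p" "inj_on \<sigma> E" "\<sigma> ` E \<subseteq> D" "\<forall>\<xi>\<in>E. \<pi> (\<sigma> \<xi>) = \<pi>' \<xi>"
  shows "is_copy A UA RA E \<pi>' (p \<circ> \<sigma>)"
proof -
  have "inj_on p D" using assms(1) unfolding is_copy_def by blast
  then have "inj_on (p \<circ> \<sigma>) E"
    using comp_inj_on[OF assms(2) inj_on_subset[OF _ assms(3)]] by blast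
  moreover have "(p \<circ> \<sigma>) ` E \<subseteq> A"
    using assms(1,3) unfolding is_copy_def by auto
  moreover have "\<xi> \<in> E \<Longrightarrow> UA u (p (\<sigma> \<xi>)) \<longleftrightarrow> UA u (\<pi>' \<xi>)" for u \<xi>
    using assms(1,3,4) unfolding is_copy_def by (metis image_subset_iff)
  moreover have "\<xi> \<in> E \<Longrightarrow> \<eta> \<in> E \<Longrightarrow> RA r (p (\<sigma> \<xi>)) (p (\<sigma> \<eta>)) \<longleftrightarrow> RA r (\<pi>' \<xi>) (\<pi>' \<eta>)"
    for r \<xi> \<eta>
    using assms(1,3,4) unfolding is_copy_def by (metis image_subset_iff)
  ultimately show ?thesis unfolding is_copy_def by simp
qed

lemma is_aut_into: "is_aut A UA RA lt g \<Longrightarrow> x \<in> A \<Longrightarrow> g x \<in> A"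
  unfolding is_aut_def bij_betw_def by blast

lemma is_aut_comp:
  assumes "is_aut A UA RA lt g" "is_aut A UA RA lt h"
  shows "is_aut A UA RA lt (h \<circ> g)"
  unfolding is_aut_def
proof (intro conjI allI ballI)
  show "bij_betw (h \<circ> g) A A"
    using assms bij_betw_trans unfolding is_aut_def by blast
  fix u r x y assume "x \<in> A" "y \<in> A"
  then have "g x \<in> A" "g y \<in> A" using is_aut_into[OF assms(1)] by auto
  then show "UA u ((h \<circ> g) x) \<longleftrightarrow> UA u x"
    and "RA r ((h \<circ> g) x) ((h \<circ> g) y) \<longleftrightarrow> RA r x y"
    and "lt ((h \<circ> g) x) ((h \<circ> g) y) \<longleftrightarrow> lt x y"
    using assms \<open>x \<in> A\<close> \<open>y \<in> A\<close> unfolding is_aut_def by simp_all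
qed

lemma is_aut_inv:
  assumes "is_aut A UA RA lt g"
  shows "is_aut A UA RA lt (inv_into A g)"
proof -
  have g: "bij_betw g A A" using assms unfolding is_aut_def by blast
  have ginv: "bij_betw (inv_into A g) A A" using bij_betw_inv_into[OF g] .
  have cancel: "g (inv_into A g x) = x" and into: "inv_into A g x \<in> A" if "x \<in> A" for x
    using that g bij_betw_inv_into_right bij_betwE[OF ginv] by auto
  show ?thesis
    unfolding is_aut_def
  proof (intro conjI allI ballI)
    fix u r x y assume "x \<in> A" "y \<in> A"
    then show "UA u (inv_into A g x) \<longleftrightarrow> UA u x"
      and "RA r (inv_into A g x) (inv_into A g y) \<longleftrightarrow> RA r x y"
      and "lt (inv_into A g x) (inv_into A g y) \<longleftrightarrow> lt x y"
      using assms cancel into unfolding is_aut_def by metis+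
  qed (rule ginv)
qed

lemma is_copy_aut:
  assumes "is_aut A UA RA lt g" "is_copy A UA RA D \<pi> p"
  shows "is_copy A UA RA D \<pi> (g \<circ> p)"
proof -
  have p: "inj_on p D" "p ` D \<subseteq> A" using assms(2) unfolding is_copy_def by blast+
  have "inj_on g A" using assms(1) unfolding is_aut_def bij_betw_def by blast
  then have "inj_on (g \<circ> p) D" using comp_inj_on[OF p(1) inj_on_subset[OF _ p(2)]] by blast
  moreover have "(g \<circ> p) ` D \<subseteq> A" using p(2) is_aut_into[OF assms(1)] by auto
  moreover have "UA u (g (p \<xi>)) \<longleftrightarrow> UA u (p \<xi>)"
    and "RA r (g (p \<xi>)) (g (p \<eta>)) \<longleftrightarrow> RA r (p \<xi>) (p \<eta>)"
    if "\<xi> \<in> D" "\<eta> \<in> D" for u r \<xi> \<eta>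
  proof -
    have "p \<xi> \<in> A" "p \<eta> \<in> A" using p(2) that by auto
    then show "UA u (g (p \<xi>)) \<longleftrightarrow> UA u (p \<xi>)"
      and "RA r (g (p \<xi>)) (g (p \<eta>)) \<longleftrightarrow> RA r (p \<xi>) (p \<eta>)"
      using assms(1) unfolding is_aut_def by simp_all
  qed
  ultimately show ?thesis using assms(2) unfolding is_copy_def by simp
qed

lemma homogeneous_extend:
  assumes "homogeneous A UA RA lt" "finite X" "X \<subseteq> A" "is_copy A UA RA X id h"
    and "\<forall>x\<in>X. \<forall>y\<in>X. lt (h x) (h y) \<longleftrightarrow> lt x y"
  obtains g where "is_aut A UA RA lt g" "\<forall>x\<in>X. g x = h x"
  using assms(1)[unfolded homogeneous_def, rule_format, of X h] assms(2-)
  unfolding is_copy_def by auto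

definition twin_lt :: "('a \<Rightarrow> 'a \<Rightarrow> bool) \<Rightarrow> 'a \<times> bool \<Rightarrow> 'a \<times> bool \<Rightarrow> bool" where
  "twin_lt lt \<xi> \<eta> \<longleftrightarrow> lt (fst \<xi>) (fst \<eta>) \<or> (fst \<xi> = fst \<eta> \<and> \<not> snd \<xi> \<and> snd \<eta>)"

lemma strict_total_on_twin_lt:
  assumes "strict_total_on X lt"
  shows "strict_total_on (X \<times> UNIV) (twin_lt lt)"
proof -
  have irrefl: "x \<in> X \<Longrightarrow> \<not> lt x x"
    and trans: "x \<in> X \<Longrightarrow> y \<in> X \<Longrightarrow> z \<in> X \<Longrightarrow> lt x y \<Longrightarrow> lt y z \<Longrightarrow> lt x z"
    and total: "x \<in> X \<Longrightarrow> y \<in> X \<Longrightarrow> x \<noteq> y \<Longrightarrow> lt x y \<or> lt y x" for x y z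
    using assms unfolding strict_total_on_def by blast+
  show ?thesis
    unfolding strict_total_on_def
  proof (intro conjI ballI impI)
    fix \<xi> :: "'a \<times> bool" assume "\<xi> \<in> X \<times> UNIV"
    then show "\<not> twin_lt lt \<xi> \<xi>" using irrefl unfolding twin_lt_def by auto
  next
    fix \<xi> \<eta> \<zeta> :: "'a \<times> bool"
    assume "\<xi> \<in> X \<times> UNIV" "\<eta> \<in> X \<times> UNIV" "\<zeta> \<in> X \<times> UNIV"
      and "twin_lt lt \<xi> \<eta> \<and> twin_lt lt \<eta> \<zeta>"
    then show "twin_lt lt \<xi> \<zeta>"
      using trans[of "fst \<xi>" "fst \<eta>" "fst \<zeta>"] unfolding twin_lt_def by auto
  next
    fix \<xi> \<eta> :: "'a \<times> bool"
    assume "\<xi> \<in> X \<times> UNIV" "\<eta> \<in> X \<times> UNIV" "\<xi> \<noteq> \<eta>"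
    then show "twin_lt lt \<xi> \<eta> \<or> twin_lt lt \<eta> \<xi>"
      using total[of "fst \<xi>" "fst \<eta>"] unfolding twin_lt_def by (auto simp: prod_eq_iff)
  qed
qed

lemma fraisse_limit_realises_pullback:
  assumes F: "\<forall>(C, U, R)\<in>F. finite C \<and> all_related C R"
    and fl: "fraisse_limit F A UA RA lt"
    and "finite D" "\<pi> ` D \<subseteq> A" "strict_total_on D L"
  obtains p where "is_copy A UA RA D \<pi> p" "\<forall>\<xi>\<in>D. \<forall>\<eta>\<in>D. lt (p \<xi>) (p \<eta>) \<longleftrightarrow> L \<xi> \<eta>"
proof -
  define C where "C = {0..<card D}"
  obtain f where f: "bij_betw f C D"
    using ex_bij_betw_nat_finite[OF assms(3)] unfolding C_def by blast
  have f_img: "f ` C = D" and f_inj: "inj_on f C" using f by (auto simp: bij_betw_def)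
  have "(\<pi> \<circ> f) ` C \<subseteq> A" by (simp only: image_comp[symmetric] f_img assms(4))
  then have "in_Forb F C (\<lambda>u k. UA u (\<pi> (f k))) (\<lambda>r k l. RA r (\<pi> (f k)) (\<pi> (f l)))"
    using pullback_in_Forb[OF F fl, of C "\<pi> \<circ> f"] unfolding C_def by simp
  moreover have "strict_total_on C (\<lambda>k l. L (f k) (f l))"
    using assms(5) strict_total_on_image[OF f_inj] f_img by simp
  ultimately obtain e where e: "emb_ord C (\<lambda>u k. UA u (\<pi> (f k)))
      (\<lambda>r k l. RA r (\<pi> (f k)) (\<pi> (f l))) (\<lambda>k l. L (f k) (f l)) A UA RA lt e"
    using fraisse_limit_age[OF fl] unfolding C_def in_ordK_iff by blast
  then have e_copy: "is_copy A UA RA C (\<pi> \<circ> f) e"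
    unfolding emb_ord_def emb_def is_copy_def by auto
  define g where "g = inv_into C f"
  have g: "bij_betw g D C" using bij_betw_inv_into[OF f] unfolding g_def .
  have f_g: "f (g \<xi>) = \<xi>" if "\<xi> \<in> D" for \<xi>
    using that f_img f_inv_into_f[of \<xi> f C] unfolding g_def by simp
  show ?thesis
  proof (rule that)
    show "is_copy A UA RA D \<pi> (e \<circ> g)"
      using is_copy_reindex[OF e_copy, of g D \<pi>] g f_g by (simp add: bij_betw_def)
    have e_lt: "\<forall>k\<in>C. \<forall>l\<in>C. L (f k) (f l) \<longleftrightarrow> lt (e k) (e l)"
      using e unfolding emb_ord_def by blast
    show "\<forall>\<xi>\<in>D. \<forall>\<eta>\<in>D. lt ((e \<circ> g) \<xi>) ((e \<circ> g) \<eta>) \<longleftrightarrow> L \<xi> \<eta>"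
    proof (intro ballI)
      fix \<xi> \<eta> assume "\<xi> \<in> D" "\<eta> \<in> D"
      then show "lt ((e \<circ> g) \<xi>) ((e \<circ> g) \<eta>) \<longleftrightarrow> L \<xi> \<eta>"
        using e_lt bij_betwE[OF g] f_g by (metis comp_apply)
    qed
  qed
qed

text \<open>\<open>q (x, True)\<close> is a twin of \<open>x\<close>: related to everything exactly as \<open>x\<close> is, but
  unrelated to \<open>x\<close>, and placed directly above \<open>x\<close> relative to \<open>X\<close>.\<close>
definition twin_copy ::
  "'a set \<Rightarrow> ('u \<Rightarrow> 'a \<Rightarrow> bool) \<Rightarrow> ('r \<Rightarrow> 'a \<Rightarrow> 'a \<Rightarrow> bool) \<Rightarrow> ('a \<Rightarrow> 'a \<Rightarrow> bool) \<Rightarrow>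
   'a set \<Rightarrow> ('a \<times> bool \<Rightarrow> 'a) \<Rightarrow> bool" where
  "twin_copy A UA RA lt X q \<longleftrightarrow> (\<forall>x\<in>X. q (x, False) = x) \<and> is_copy A UA RA (X \<times> UNIV) fst q \<and>
     (\<forall>\<xi>\<in>X \<times> UNIV. \<forall>\<eta>\<in>X \<times> UNIV. lt (q \<xi>) (q \<eta>) \<longleftrightarrow> twin_lt lt \<xi> \<eta>)"

lemma fraisse_limit_twin_copy:
  assumes F: "\<forall>(C, U, R)\<in>F. finite C \<and> all_related C R"
    and fl: "fraisse_limit F A UA RA lt"
    and X: "finite X" "X \<subseteq> A"
  obtains q where "twin_copy A UA RA lt X q"
proof -
  have "finite (X \<times> (UNIV :: bool set))" using X(1) by simp
  moreover have "fst ` (X \<times> UNIV) \<subseteq> A" using X(2) by auto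
  moreover have "strict_total_on (X \<times> UNIV) (twin_lt lt)"
    using strict_total_on_twin_lt fraisse_limit_finite_substructure(1)[OF fl X] .
  ultimately obtain p where p: "is_copy A UA RA (X \<times> UNIV) fst p"
    and p_lt: "\<forall>\<xi>\<in>X \<times> UNIV. \<forall>\<eta>\<in>X \<times> UNIV. lt (p \<xi>) (p \<eta>) \<longleftrightarrow> twin_lt lt \<xi> \<eta>"
    by (rule fraisse_limit_realises_pullback[OF F fl])
  define p0 where "p0 = (\<lambda>x. p (x, False))"
  have "is_copy A UA RA X id p0"
    using is_copy_reindex[OF p, of "\<lambda>x. (x, False)" X id] unfolding p0_def
    by (auto simp: comp_def inj_on_def)
  moreover have "\<forall>x\<in>X. \<forall>y\<in>X. lt (p0 x) (p0 y) \<longleftrightarrow> lt x y"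
    using p_lt by (simp add: p0_def twin_lt_def)
  ultimately obtain G where G: "is_aut A UA RA lt G" "\<forall>x\<in>X. G x = p0 x"
    using homogeneous_extend[OF fraisse_limit_homogeneous[OF fl] X] by blast
  define q where "q = inv_into A G \<circ> p"
  have G_inv: "is_aut A UA RA lt (inv_into A G)" using is_aut_inv[OF G(1)] .
  have "inj_on G A" using G(1) unfolding is_aut_def bij_betw_def by blast
  then have "q (x, False) = x" if "x \<in> X" for x
    using G(2) X(2) that inv_into_f_f[of G A x] by (auto simp: q_def p0_def)
  moreover have q: "is_copy A UA RA (X \<times> UNIV) fst q"
    using is_copy_aut[OF G_inv p] unfolding q_def .
  moreover have "lt (q \<xi>) (q \<eta>) \<longleftrightarrow> twin_lt lt \<xi> \<eta>" if "\<xi> \<in> X \<times> UNIV" "\<eta> \<in> X \<times> UNIV" for \<xi> \<eta>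
  proof -
    have "p \<xi> \<in> A" "p \<eta> \<in> A" using p that unfolding is_copy_def by auto
    then have "lt (q \<xi>) (q \<eta>) \<longleftrightarrow> lt (p \<xi>) (p \<eta>)"
      using G_inv unfolding q_def is_aut_def by simp
    then show ?thesis using p_lt that by blast
  qed
  ultimately show ?thesis using that unfolding twin_copy_def by blast
qed

lemma twin_copy_shift:
  assumes hom: "homogeneous A UA RA lt" and X: "finite X" "X \<subseteq> A"
    and "S \<subseteq> X" and q: "twin_copy A UA RA lt X q"
  obtains H where "aut_fix A UA RA lt S H" "\<forall>x\<in>X - S. H x = q (x, True)"
proof -
  define h where "h = (\<lambda>x. q (x, x \<notin> S))"
  have q_copy: "is_copy A UA RA (X \<times> UNIV) fst q"
    and q_lt: "\<forall>\<xi>\<in>X \<times> UNIV. \<forall>\<eta>\<in>X \<times> UNIV. lt (q \<xi>) (q \<eta>) \<longleftrightarrow> twin_lt lt \<xi> \<eta>"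
    using q unfolding twin_copy_def by blast+
  have "is_copy A UA RA X id h"
    using is_copy_reindex[OF q_copy, of "\<lambda>x. (x, x \<notin> S)" X id] unfolding h_def
    by (auto simp: comp_def inj_on_def)
  moreover have "\<forall>x\<in>X. \<forall>y\<in>X. lt (h x) (h y) \<longleftrightarrow> lt x y"
    using q_lt unfolding h_def twin_lt_def by auto
  ultimately obtain H where H: "is_aut A UA RA lt H" "\<forall>x\<in>X. H x = h x"
    using homogeneous_extend[OF hom X] by blast
  have "\<forall>s\<in>S. H s = s" using H(2) assms(4) q unfolding h_def twin_copy_def by auto
  moreover have "\<forall>x\<in>X - S. H x = q (x, True)" using H(2) unfolding h_def by simp
  ultimately show ?thesis using that H(1) unfolding aut_fix_def by blast
qed

lemma orbit_S_ordered:
  assumes "S \<subseteq> A" "S_ordered A lt S I a0" "a \<in> orbit A UA RA lt S I a0"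
  shows "S_ordered A lt S I a"
proof -
  obtain g where g: "is_aut A UA RA lt g" "\<forall>s\<in>S. g s = s" and a: "a = (\<lambda>i\<in>I. g (a0 i))"
    using assms(3) unfolding orbit_def aut_fix_def by blast
  have a0: "a0 i \<in> A" "a0 i \<notin> S" if "i \<in> I" for i
    using assms(2) that unfolding S_ordered_def by auto
  have "inj_on g A" using g(1) unfolding is_aut_def bij_betw_def by blast
  then have "g (a0 i) \<notin> S" if "i \<in> I" for i
    using a0[OF that] g(2) assms(1) by (metis inj_onD subsetD)
  then show ?thesis
    using assms(2) a0 g(1) is_aut_into[OF g(1)] unfolding S_ordered_def is_aut_def a by auto
qed

lemma orbit_closed:
  assumes "a \<in> orbit A UA RA lt S I a0" "aut_fix A UA RA lt S H"
  shows "(\<lambda>i\<in>I. H (a i)) \<in> orbit A UA RA lt S I a0"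
proof -
  obtain g where g: "aut_fix A UA RA lt S g" and a: "a = (\<lambda>i\<in>I. g (a0 i))"
    using assms(1) unfolding orbit_def by blast
  have "aut_fix A UA RA lt S (H \<circ> g)"
    using g assms(2) is_aut_comp unfolding aut_fix_def by auto
  moreover have "(\<lambda>i\<in>I. H (a i)) = (\<lambda>i\<in>I. (H \<circ> g) (a0 i))" unfolding a by auto
  ultimately show ?thesis unfolding orbit_def by blast
qed

lemma twin_copy_duo:
  assumes q: "twin_copy A UA RA lt X q" and "a ` I \<subseteq> X"
    and mono: "\<forall>i\<in>I. \<forall>j\<in>I. i < j \<longrightarrow> lt (a i) (a j)"
    and b: "\<forall>i\<in>I. b i = q (a i, True)"
    and "a \<in> Orb" "b \<in> Orb"
  shows "is_duo RA lt I Orb a b"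
proof -
  have q_lt: "lt (q (x, c)) (q (y, d)) \<longleftrightarrow> twin_lt lt (x, c) (y, d)"
    and q_R: "RA r (q (x, c)) (q (y, d)) \<longleftrightarrow> RA r x y"
    if "x \<in> X" "y \<in> X" for x y c d r
    using q that unfolding twin_copy_def is_copy_def by auto
  have ab: "q (a i, False) = a i" "b i = q (a i, True)" and aX: "a i \<in> X" if "i \<in> I" for i
    using q b assms(2) that unfolding twin_copy_def by auto
  show ?thesis
    unfolding is_duo_def
  proof (intro conjI ballI allI impI)
    fix i j r assume i: "i \<in> I" and j: "j \<in> I"
    show "RA r (a i) (b j) \<longleftrightarrow> RA r (a i) (a j)" "RA r (a i) (a j) \<longleftrightarrow> RA r (b i) (b j)"
      "RA r (b i) (b j) \<longleftrightarrow> RA r (b i) (a j)"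
      using q_R aX ab i j by metis+
    show "lt (b i) (a j)" if "i < j"
    proof -
      have "lt (q (a i, True)) (q (a j, False))"
        using q_lt[OF aX[OF i] aX[OF j], of True False] mono i j that by (simp add: twin_lt_def)
      then show ?thesis using ab[OF i] ab[OF j] by simp
    qed
  next
    fix i assume i: "i \<in> I"
    show "lt (a i) (b i)"
      using q_lt[OF aX[OF i] aX[OF i], of False True] ab[OF i] by (simp add: twin_lt_def)
  qed (use assms(5,6) in auto)
qed

theorem mainTheorem11:
  fixes F :: "(nat set \<times> ('u::finite \<Rightarrow> nat \<Rightarrow> bool) \<times> ('r::finite \<Rightarrow> nat \<Rightarrow> nat \<Rightarrow> bool)) set"
    and A :: "'a set" and UA :: "'u \<Rightarrow> 'a \<Rightarrow> bool" and RA :: "'r \<Rightarrow> 'a \<Rightarrow> 'a \<Rightarrow> bool"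
    and lt :: "'a \<Rightarrow> 'a \<Rightarrow> bool"
    and S :: "'a set" and I :: "'i::linorder set" and a0 a :: "'i \<Rightarrow> 'a"
  assumes "\<forall>(C, U, R)\<in>F. finite C \<and> all_related C R"
    and "fraisse_limit F A UA RA lt"
    and "finite S" and "S \<subseteq> A"
    and "finite I"
    and "S_ordered A lt S I a0"
    and "a \<in> orbit A UA RA lt S I a0"
  shows "\<exists>b. is_duo RA lt I (orbit A UA RA lt S I a0) a b"
proof -
  have a: "S_ordered A lt S I a" using orbit_S_ordered assms(4,6,7) .
  define X where "X = S \<union> a ` I"
  have X: "finite X" "X \<subseteq> A" using assms(3-5) a unfolding X_def S_ordered_def by auto
  obtain q where q: "twin_copy A UA RA lt X q"
    using fraisse_limit_twin_copy[OF assms(1,2) X] .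
  obtain H where H: "aut_fix A UA RA lt S H" "\<forall>x\<in>X - S. H x = q (x, True)"
    using twin_copy_shift[OF fraisse_limit_homogeneous[OF assms(2)] X _ q] unfolding X_def by blast
  define b where "b = (\<lambda>i\<in>I. H (a i))"
  have "b \<in> orbit A UA RA lt S I a0" using orbit_closed[OF assms(7) H(1)] unfolding b_def .
  moreover have "\<forall>i\<in>I. b i = q (a i, True)"
    using H(2) a unfolding b_def X_def S_ordered_def by auto
  ultimately have "is_duo RA lt I (orbit A UA RA lt S I a0) a b"
    using twin_copy_duo[OF q] assms(7) a unfolding X_def S_ordered_def by blast
  then show ?thesis by blast
qed

end
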